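(* Let $G=\mathrm{SL}_3(\mathbb C)$, $B$ the upper-triangular, $U$ the upper unitriangular and $T$ the diagonal matrices in $G$. Let $H$ be the group of matrices $\begin{pmatrix} t&0&a\\0&1&b\\0&0&t^{-1}\end{pmatrix}$ with $a,b\in\mathbb C$, $t\in\mathbb C^\times$, and let $N$ be its subgroup with $t=1$. Then $H$ is a connected solvable spherical subgroup of $G$, $N_G(H)=T\ltimes N$, and $N_G(N_G(H))=N_G(H)\cup\rho N_G(H)$ where $\rho=\begin{pmatrix}0&1&0\\1&0&0\\0&0&-1\end{pmatrix}$. In particular $N_G(N_G(H))\neq N_G(H)$.
   Context: A closed subgroup $H\subset G$ of an algebraic group $G$ is spherical if a Borel subgroup of $G$ has an open orbit on $G/H$. $N_G(K)$ denotes the normalizer of $K$ in $G$. *)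

theory Defs
  imports "HOL-Analysis.Analysis"
begin

type_synonym cmat = "complex^3^3"

definition mat3 :: "complex \<Rightarrow> complex \<Rightarrow> complex \<Rightarrow> complex \<Rightarrow> complex \<Rightarrow> complex
   \<Rightarrow> complex \<Rightarrow> complex \<Rightarrow> complex \<Rightarrow> cmat" where
  "mat3 a11 a12 a13 a21 a22 a23 a31 a32 a33 =
     (\<chi> i j. if i = 1 then (if j = 1 then a11 else if j = 2 then a12 else a13)
            else if i = 2 then (if j = 1 then a21 else if j = 2 then a22 else a23)
            else (if j = 1 then a31 else if j = 2 then a32 else a33))"

definition minv :: "cmat \<Rightarrow> cmat" where
  "minv A = (SOME X. A ** X = mat 1 \<and> X ** A = mat 1)"

definition SL3 :: "cmat set" where
  "SL3 = {A. det A = 1}"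

inductive_set poly_fun :: "(cmat \<Rightarrow> complex) set" where
  pconst: "(\<lambda>A. c) \<in> poly_fun"
| pcoord: "(\<lambda>A. A $ i $ j) \<in> poly_fun"
| padd: "p \<in> poly_fun \<Longrightarrow> q \<in> poly_fun \<Longrightarrow> (\<lambda>A. p A + q A) \<in> poly_fun"
| pmult: "p \<in> poly_fun \<Longrightarrow> q \<in> poly_fun \<Longrightarrow> (\<lambda>A. p A * q A) \<in> poly_fun"

text \<open>Zariski topology on G (induced from affine 9-space).\<close>
definition zclosed :: "cmat set \<Rightarrow> bool" where
  "zclosed S \<longleftrightarrow> (\<exists>P \<subseteq> poly_fun. S = SL3 \<inter> {A. \<forall>p\<in>P. p A = 0})"

definition zopen :: "cmat set \<Rightarrow> bool" where
  "zopen U \<longleftrightarrow> U \<subseteq> SL3 \<and> zclosed (SL3 - U)"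

definition zconnected :: "cmat set \<Rightarrow> bool" where
  "zconnected S \<longleftrightarrow> \<not> (\<exists>U V. zopen U \<and> zopen V \<and> S \<subseteq> U \<union> V \<and> U \<inter> V \<inter> S = {}
                           \<and> U \<inter> S \<noteq> {} \<and> V \<inter> S \<noteq> {})"

definition msubgroup :: "cmat set \<Rightarrow> bool" where
  "msubgroup K \<longleftrightarrow> K \<subseteq> SL3 \<and> mat 1 \<in> K \<and> (\<forall>x\<in>K. \<forall>y\<in>K. x ** y \<in> K)
      \<and> (\<forall>x\<in>K. minv x \<in> K)"

definition closed_subgroup :: "cmat set \<Rightarrow> bool" where
  "closed_subgroup K \<longleftrightarrow> msubgroup K \<and> zclosed K"

definition derived :: "cmat set \<Rightarrow> cmat set" where
  "derived K = \<Inter>{L. msubgroup L \<and>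
      {x ** y ** minv x ** minv y | x y. x \<in> K \<and> y \<in> K} \<subseteq> L}"

definition msolvable :: "cmat set \<Rightarrow> bool" where
  "msolvable K \<longleftrightarrow> (\<exists>n. (derived ^^ n) K = {mat 1})"

definition borel :: "cmat set \<Rightarrow> bool" where
  "borel K \<longleftrightarrow> closed_subgroup K \<and> zconnected K \<and> msolvable K \<and>
     (\<forall>L. closed_subgroup L \<and> zconnected L \<and> msolvable L \<and> K \<subseteq> L \<longrightarrow> L = K)"

text \<open>H spherical: some Borel subgroup has an open orbit on G/H; the orbit of xH
  is open in G/H iff its preimage B x H is open in G.\<close>
definition spherical :: "cmat set \<Rightarrow> bool" where
  "spherical H \<longleftrightarrow> closed_subgroup H \<and>
     (\<exists>Bo. borel Bo \<and> (\<exists>x\<in>SL3. zopen {b ** x ** h | b h. b \<in> Bo \<and> h \<in> H}))"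

definition normalizer :: "cmat set \<Rightarrow> cmat set" where
  "normalizer K = {g \<in> SL3. (\<lambda>h. g ** h ** minv g) ` K = K}"

definition Tdiag :: "cmat set" where
  "Tdiag = {mat3 s 0 0 0 t 0 0 0 u | s t u. s * t * u = 1}"

definition Hgrp :: "cmat set" where
  "Hgrp = {mat3 t 0 a 0 1 b 0 0 (inverse t) | t a b. t \<noteq> 0}"

definition Ngrp :: "cmat set" where
  "Ngrp = {mat3 1 0 a 0 1 b 0 0 1 | a b. True}"

definition rho :: cmat where
  "rho = mat3 0 1 0 1 0 0 0 0 (-1)"

end

theory Submission
  imports Defs
begin

text \<open>
  \<^item> Zariski connectedness: a subset of \<open>G\<close> in which any two points are joined by a
    regular curve on a principal open subset of \<open>\<complex>\<close> is connected (irreducibility of \<open>\<complex>\<close>).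
  \<^item> Solvability: \<open>K\<close> is solvable once its commutators lie in a solvable subgroup;
    conversely a root pair of an \<open>SL\<^sub>2\<close> inside \<open>K\<close> survives in the whole derived series.
  \<^item> The upper triangular group \<open>B\<close> is a Borel subgroup: closed, connected, solvable via
    \<open>B \<supseteq> U \<supseteq> Z(U) \<supseteq> 1\<close>, and maximal, since any larger subgroup contains a root pair.
  \<^item> \<open>H\<close> is closed, connected (a line of parameters) and solvable (\<open>[H,H] \<subseteq> N\<close>); it is
    spherical because \<open>B x\<^sub>0 H\<close> is the non-vanishing locus of an explicit polynomial.
  \<^item> Normalizers are computed by intertwining with unipotent and torus elements:
    \<open>N(H) = M = T \<ltimes> N\<close> and \<open>N(M) = M \<union> \<rho> M\<close>, with \<open>\<rho> \<notin> M\<close>.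
\<close>

lemma mat3_entries [simp]:
  "mat3 a11 a12 a13 a21 a22 a23 a31 a32 a33 $ 1 $ 1 = a11"
  "mat3 a11 a12 a13 a21 a22 a23 a31 a32 a33 $ 1 $ 2 = a12"
  "mat3 a11 a12 a13 a21 a22 a23 a31 a32 a33 $ 1 $ 3 = a13"
  "mat3 a11 a12 a13 a21 a22 a23 a31 a32 a33 $ 2 $ 1 = a21"
  "mat3 a11 a12 a13 a21 a22 a23 a31 a32 a33 $ 2 $ 2 = a22"
  "mat3 a11 a12 a13 a21 a22 a23 a31 a32 a33 $ 2 $ 3 = a23"
  "mat3 a11 a12 a13 a21 a22 a23 a31 a32 a33 $ 3 $ 1 = a31"
  "mat3 a11 a12 a13 a21 a22 a23 a31 a32 a33 $ 3 $ 2 = a32"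
  "mat3 a11 a12 a13 a21 a22 a23 a31 a32 a33 $ 3 $ 3 = a33"
  by (simp_all add: mat3_def)

lemma mat3_eta:
  "A = mat3 (A$1$1) (A$1$2) (A$1$3) (A$2$1) (A$2$2) (A$2$3) (A$3$1) (A$3$2) (A$3$3)"
  unfolding mat3_def by (simp add: vec_eq_iff) (metis exhaust_3)

lemma cmat_eq_iff: "(A::cmat) = B \<longleftrightarrow> (\<forall>i j. A$i$j = B$i$j)"
  by (simp add: vec_eq_iff)

lemma mat3_eq:
  "mat3 a11 a12 a13 a21 a22 a23 a31 a32 a33 = mat3 b11 b12 b13 b21 b22 b23 b31 b32 b33 \<longleftrightarrow>
   a11 = b11 \<and> a12 = b12 \<and> a13 = b13 \<and> a21 = b21 \<and> a22 = b22 \<and> a23 = b23 \<and>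
   a31 = b31 \<and> a32 = b32 \<and> a33 = b33"
  by (simp add: cmat_eq_iff forall_3)

lemma mat3_mult:
  "mat3 a11 a12 a13 a21 a22 a23 a31 a32 a33 ** mat3 b11 b12 b13 b21 b22 b23 b31 b32 b33
   = mat3 (a11*b11+a12*b21+a13*b31) (a11*b12+a12*b22+a13*b32) (a11*b13+a12*b23+a13*b33)
          (a21*b11+a22*b21+a23*b31) (a21*b12+a22*b22+a23*b32) (a21*b13+a22*b23+a23*b33)
          (a31*b11+a32*b21+a33*b31) (a31*b12+a32*b22+a33*b32) (a31*b13+a32*b23+a33*b33)"
  by (simp add: cmat_eq_iff forall_3 matrix_matrix_mult_def sum_3)

lemma mat3_one: "mat 1 = mat3 1 0 0 0 1 0 0 0 1"
  by (simp add: cmat_eq_iff forall_3 mat_def)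

lemma one_entries: "mat 1 $ i $ j = (if i = j then (1::complex) else 0)"
  by (simp add: mat_def)

lemma mult_entry: "((A::cmat) ** B) $ i $ j = A$i$1*B$1$j + A$i$2*B$2$j + A$i$3*B$3$j"
  by (simp add: matrix_matrix_mult_def sum_3)

lemma mat3_det:
  "det (mat3 a11 a12 a13 a21 a22 a23 a31 a32 a33) =
   a11*a22*a33 - a11*a23*a32 - a12*a21*a33 + a12*a23*a31 + a13*a21*a32 - a13*a22*a31"
  by (simp add: det_3 algebra_simps)

lemma det_entries:
  "det (A::cmat) = A$1$1*A$2$2*A$3$3 - A$1$1*A$2$3*A$3$2 - A$1$2*A$2$1*A$3$3
     + A$1$2*A$2$3*A$3$1 + A$1$3*A$2$1*A$3$2 - A$1$3*A$2$2*A$3$1"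
  by (subst mat3_eta) (simp only: mat3_det)

lemma SL3_det:
  "A \<in> SL3 \<longleftrightarrow> A$1$1*A$2$2*A$3$3 - A$1$1*A$2$3*A$3$2 - A$1$2*A$2$1*A$3$3
     + A$1$2*A$2$3*A$3$1 + A$1$3*A$2$1*A$3$2 - A$1$3*A$2$2*A$3$1 = 1"
  by (simp add: SL3_def det_entries)

lemma minv_unique:
  assumes "A ** X = mat 1" "X ** A = mat 1"
  shows "minv A = X"
proof -
  have "\<exists>Y. A ** Y = mat 1 \<and> Y ** A = mat 1" using assms by blast
  then have Y: "A ** minv A = mat 1" "minv A ** A = mat 1"
    unfolding minv_def by (metis (mono_tags, lifting) someI_ex)+
  have "minv A = minv A ** (A ** X)" using assms by simp
  also have "\<dots> = X" using Y by (simp add: matrix_mul_assoc)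
  finally show ?thesis .
qed

lemma minv_mat3:
  assumes "det (mat3 a11 a12 a13 a21 a22 a23 a31 a32 a33) = 1"
  shows "minv (mat3 a11 a12 a13 a21 a22 a23 a31 a32 a33) =
    mat3 (a22*a33 - a23*a32) (a13*a32 - a12*a33) (a12*a23 - a13*a22)
         (a23*a31 - a21*a33) (a11*a33 - a13*a31) (a13*a21 - a11*a23)
         (a21*a32 - a22*a31) (a12*a31 - a11*a32) (a11*a22 - a12*a21)"
  using assms unfolding mat3_det
  by (intro minv_unique) (simp_all add: mat3_mult mat3_one mat3_eq algebra_simps)

lemma minv_entries:
  assumes "A \<in> SL3"
  shows "minv A $1$1 = A$2$2*A$3$3 - A$2$3*A$3$2" "minv A $1$2 = A$1$3*A$3$2 - A$1$2*A$3$3"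
    "minv A $1$3 = A$1$2*A$2$3 - A$1$3*A$2$2"
    "minv A $2$1 = A$2$3*A$3$1 - A$2$1*A$3$3" "minv A $2$2 = A$1$1*A$3$3 - A$1$3*A$3$1"
    "minv A $2$3 = A$1$3*A$2$1 - A$1$1*A$2$3"
    "minv A $3$1 = A$2$1*A$3$2 - A$2$2*A$3$1" "minv A $3$2 = A$1$2*A$3$1 - A$1$1*A$3$2"
    "minv A $3$3 = A$1$1*A$2$2 - A$1$2*A$2$1"
proof -
  have "det (mat3 (A$1$1) (A$1$2) (A$1$3) (A$2$1) (A$2$2) (A$2$3) (A$3$1) (A$3$2) (A$3$3)) = 1"
    using assms by (simp add: SL3_det mat3_det)
  from minv_mat3[OF this] show
    "minv A $1$1 = A$2$2*A$3$3 - A$2$3*A$3$2" "minv A $1$2 = A$1$3*A$3$2 - A$1$2*A$3$3"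
    "minv A $1$3 = A$1$2*A$2$3 - A$1$3*A$2$2"
    "minv A $2$1 = A$2$3*A$3$1 - A$2$1*A$3$3" "minv A $2$2 = A$1$1*A$3$3 - A$1$3*A$3$1"
    "minv A $2$3 = A$1$3*A$2$1 - A$1$1*A$2$3"
    "minv A $3$1 = A$2$1*A$3$2 - A$2$2*A$3$1" "minv A $3$2 = A$1$2*A$3$1 - A$1$1*A$3$2"
    "minv A $3$3 = A$1$1*A$2$2 - A$1$2*A$2$1"
    by (simp_all flip: mat3_eta)
qed

lemma SL3_mult: "A \<in> SL3 \<Longrightarrow> B \<in> SL3 \<Longrightarrow> A ** B \<in> SL3"
  by (simp add: SL3_def det_mul)

lemma one_SL3: "mat 1 \<in> SL3"
  by (simp add: SL3_def)

lemma SL3_inv: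
  assumes "A \<in> SL3"
  shows "A ** minv A = mat 1" "minv A ** A = mat 1" "minv A \<in> SL3"
proof -
  have "invertible A" using assms by (simp add: SL3_def invertible_det_nz)
  then obtain X where X: "A ** X = mat 1" "X ** A = mat 1" unfolding invertible_def by blast
  then have "minv A = X" by (rule minv_unique)
  with X show "A ** minv A = mat 1" "minv A ** A = mat 1" by auto
  have "det A * det X = 1" using X(1) by (metis det_mul det_I)
  with assms \<open>minv A = X\<close> show "minv A \<in> SL3" by (simp add: SL3_def)
qed

lemma minv_minv: "A \<in> SL3 \<Longrightarrow> minv (minv A) = A"
  by (rule minv_unique) (simp_all add: SL3_inv)

lemma msubgroupI:
  assumes "K \<subseteq> SL3" "mat 1 \<in> K" "\<And>x y. x \<in> K \<Longrightarrow> y \<in> K \<Longrightarrow> x ** y \<in> K"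
    "\<And>x. x \<in> K \<Longrightarrow> minv x \<in> K"
  shows "msubgroup K"
  using assms unfolding msubgroup_def by blast

lemma msub_mult: "msubgroup K \<Longrightarrow> x \<in> K \<Longrightarrow> y \<in> K \<Longrightarrow> x ** y \<in> K"
  and msub_inv: "msubgroup K \<Longrightarrow> x \<in> K \<Longrightarrow> minv x \<in> K"
  and msub_one: "msubgroup K \<Longrightarrow> mat 1 \<in> K"
  and msub_SL3: "msubgroup K \<Longrightarrow> K \<subseteq> SL3"
  unfolding msubgroup_def by blast+

lemma msub_conj: "msubgroup K \<Longrightarrow> g \<in> K \<Longrightarrow> x \<in> K \<Longrightarrow> g ** x ** minv g \<in> K"
  by (intro msub_mult msub_inv)

lemma msubgroup_SL3: "msubgroup SL3"
  by (rule msubgroupI) (auto simp: one_SL3 SL3_mult SL3_inv)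

lemma msubgroup_one: "msubgroup {mat 1}"
  by (rule msubgroupI) (auto simp: one_SL3 minv_unique)

lemma normalizerI:
  assumes g: "g \<in> SL3" and fwd: "\<And>k. k \<in> K \<Longrightarrow> g ** k ** minv g \<in> K"
    and bwd: "\<And>k. k \<in> K \<Longrightarrow> minv g ** k ** g \<in> K"
  shows "g \<in> normalizer K"
proof -
  have "k \<in> (\<lambda>h. g ** h ** minv g) ` K" if k: "k \<in> K" for k
  proof -
    have "g ** (minv g ** k ** g) ** minv g = (g ** minv g) ** k ** (g ** minv g)"
      by (simp add: matrix_mul_assoc)
    also have "\<dots> = k" using SL3_inv[OF g] by simp
    finally show ?thesis using bwd[OF k] by (metis image_eqI)
  qed
  then have "(\<lambda>h. g ** h ** minv g) ` K = K" using fwd by blast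
  with g show ?thesis unfolding normalizer_def by blast
qed

lemma normalizer_subgroup:
  assumes "msubgroup K" "g \<in> K"
  shows "g \<in> normalizer K"
proof (rule normalizerI)
  show "g \<in> SL3" using assms msub_SL3 by blast
  show "g ** k ** minv g \<in> K" if "k \<in> K" for k using assms that by (rule msub_conj)
  show "minv g ** k ** g \<in> K" if "k \<in> K" for k
    using msub_conj[OF assms(1) msub_inv[OF assms] that] minv_minv \<open>g \<in> SL3\<close> by simp
qed

lemma normalizer_intertwine:
  assumes g: "g \<in> normalizer K" and k: "k \<in> K"
  obtains k' where "k' \<in> K" "g ** k = k' ** g"
proof
  have gS: "g \<in> SL3" and "g ** k ** minv g \<in> K" using assms unfolding normalizer_def by blast+
  then show "g ** k ** minv g \<in> K" by simp
  have "g ** k ** minv g ** g = g ** k ** (minv g ** g)" by (simp add: matrix_mul_assoc)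
  then show "g ** k = g ** k ** minv g ** g" using SL3_inv(2)[OF gS] by simp
qed

text \<open>A function \<open>f\<close> on \<open>\<complex>\<close> is regular on the principal open set
  \<open>{D \<noteq> 0}\<close> if \<open>D\<^sup>k f\<close> agrees there with a polynomial.\<close>

definition regular_on :: "complex poly \<Rightarrow> (complex \<Rightarrow> complex) \<Rightarrow> bool" where
  "regular_on D f \<longleftrightarrow> (\<exists>k r. \<forall>z. poly D z \<noteq> 0 \<longrightarrow> poly D z ^ k * f z = poly r z)"

lemma regular_on_poly: "regular_on D (\<lambda>z. poly r z)"
  unfolding regular_on_def by (rule exI[of _ 0]) auto

lemma regular_on_const: "regular_on D (\<lambda>z. c)"
  using regular_on_poly[of D "[:c:]"] by simp

lemma regular_on_inverse: "regular_on D (\<lambda>z. inverse (poly D z))"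
  unfolding regular_on_def by (rule exI[of _ 1], rule exI[of _ 1]) simp

lemma regular_on_add:
  assumes "regular_on D f" "regular_on D g"
  shows "regular_on D (\<lambda>z. f z + g z)"
proof -
  obtain k1 r1 where 1: "\<forall>z. poly D z \<noteq> 0 \<longrightarrow> poly D z ^ k1 * f z = poly r1 z"
    using assms(1) regular_on_def by auto
  obtain k2 r2 where 2: "\<forall>z. poly D z \<noteq> 0 \<longrightarrow> poly D z ^ k2 * g z = poly r2 z"
    using assms(2) regular_on_def by auto
  have "poly D z ^ (k1 + k2) * (f z + g z) = poly (D ^ k2 * r1 + D ^ k1 * r2) z"
    if "poly D z \<noteq> 0" for z
  proof -
    have "poly D z ^ (k1 + k2) * (f z + g z) =
          poly D z ^ k2 * (poly D z ^ k1 * f z) + poly D z ^ k1 * (poly D z ^ k2 * g z)"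
      by (simp add: power_add algebra_simps)
    also have "\<dots> = poly (D ^ k2 * r1 + D ^ k1 * r2) z" using 1 2 that by (simp add: poly_power)
    finally show ?thesis .
  qed
  then show ?thesis unfolding regular_on_def by blast
qed

lemma regular_on_mult:
  assumes "regular_on D f" "regular_on D g"
  shows "regular_on D (\<lambda>z. f z * g z)"
proof -
  obtain k1 r1 where 1: "\<forall>z. poly D z \<noteq> 0 \<longrightarrow> poly D z ^ k1 * f z = poly r1 z"
    using assms(1) regular_on_def by auto
  obtain k2 r2 where 2: "\<forall>z. poly D z \<noteq> 0 \<longrightarrow> poly D z ^ k2 * g z = poly r2 z"
    using assms(2) regular_on_def by auto
  have "poly D z ^ (k1 + k2) * (f z * g z) = poly (r1 * r2) z" if "poly D z \<noteq> 0" for z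
  proof -
    have "poly D z ^ (k1 + k2) * (f z * g z) = (poly D z ^ k1 * f z) * (poly D z ^ k2 * g z)"
      by (simp add: power_add algebra_simps)
    also have "\<dots> = poly (r1 * r2) z" using 1 2 that by simp
    finally show ?thesis .
  qed
  then show ?thesis unfolding regular_on_def by blast
qed

lemma regular_on_poly_fun:
  assumes "p \<in> poly_fun" "\<And>i j. regular_on D (\<lambda>z. \<gamma> z $ i $ j)"
  shows "regular_on D (\<lambda>z. p (\<gamma> z))"
  using assms(1)
proof induction
  case (pcoord i j)
  show ?case by (rule assms(2))
qed (auto intro: regular_on_const regular_on_add regular_on_mult)

lemma regular_on_mat3:
  assumes "regular_on D f11" "regular_on D f12" "regular_on D f13"
    "regular_on D f21" "regular_on D f22" "regular_on D f23"
    "regular_on D f31" "regular_on D f32" "regular_on D f33"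
  shows "regular_on D (\<lambda>z. mat3 (f11 z) (f12 z) (f13 z) (f21 z) (f22 z) (f23 z)
                                (f31 z) (f32 z) (f33 z) $ i $ j)"
proof -
  have "i = 1 \<or> i = 2 \<or> i = 3" "j = 1 \<or> j = 2 \<or> j = 3" by (rule exhaust_3)+
  then show ?thesis using assms by (elim disjE) simp_all
qed

text \<open>Two regular functions on \<open>{D \<noteq> 0}\<close> with product zero cannot be nonzero at the points
  \<open>0\<close> and \<open>1\<close> respectively: a nonempty principal open subset of \<open>\<complex>\<close> is irreducible.\<close>

lemma regular_product_zero:
  assumes D0: "poly D 0 \<noteq> 0" and D1: "poly D 1 \<noteq> 0"
    and f: "regular_on D f" and g: "regular_on D g" and f0: "f 0 \<noteq> 0" and g1: "g 1 \<noteq> 0"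
    and fg: "\<And>z. poly D z \<noteq> 0 \<Longrightarrow> f z * g z = 0"
  shows False
proof -
  obtain k1 r1 where 1: "\<forall>z. poly D z \<noteq> 0 \<longrightarrow> poly D z ^ k1 * f z = poly r1 z"
    using f regular_on_def by auto
  obtain k2 r2 where 2: "\<forall>z. poly D z \<noteq> 0 \<longrightarrow> poly D z ^ k2 * g z = poly r2 z"
    using g regular_on_def by auto
  have "poly r1 0 \<noteq> 0" using 1 D0 f0 by (metis mult_eq_0_iff power_eq_0_iff)
  moreover have "poly r2 1 \<noteq> 0" using 2 D1 g1 by (metis mult_eq_0_iff power_eq_0_iff)
  ultimately have "r1 * r2 \<noteq> 0" by auto
  then have fin: "finite {z. poly (r1 * r2) z = 0}" by (rule poly_roots_finite)
  have "{z. poly D z \<noteq> 0} \<subseteq> {z. poly (r1 * r2) z = 0}"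
  proof
    fix z assume "z \<in> {z. poly D z \<noteq> 0}"
    then have z: "poly D z \<noteq> 0" by simp
    have "poly (r1 * r2) z = (poly D z ^ k1 * f z) * (poly D z ^ k2 * g z)" using 1 2 z by simp
    also have "\<dots> = poly D z ^ k1 * poly D z ^ k2 * (f z * g z)" by (simp add: algebra_simps)
    finally show "z \<in> {z. poly (r1 * r2) z = 0}" using fg[OF z] by simp
  qed
  then have "finite {z. poly D z \<noteq> 0}" using fin by (rule finite_subset)
  moreover have "finite {z. poly D z = 0}" using D0 by (intro poly_roots_finite) auto
  ultimately have "finite ({z. poly D z \<noteq> 0} \<union> {z. poly D z = 0})" by simp
  moreover have "{z. poly D z \<noteq> 0} \<union> {z. poly D z = 0} = (UNIV :: complex set)" by auto
  ultimately show False by (simp add: infinite_UNIV_char_0)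
qed

definition joined_by_curve :: "cmat set \<Rightarrow> cmat \<Rightarrow> cmat \<Rightarrow> bool" where
  "joined_by_curve X h1 h2 \<longleftrightarrow> (\<exists>D \<gamma>. poly D 0 \<noteq> 0 \<and> poly D 1 \<noteq> 0 \<and> \<gamma> 0 = h1 \<and> \<gamma> 1 = h2 \<and>
     (\<forall>z. poly D z \<noteq> 0 \<longrightarrow> \<gamma> z \<in> X) \<and> (\<forall>i j. regular_on D (\<lambda>z. \<gamma> z $ i $ j)))"

lemma zconnected_by_curves:
  assumes sub: "X \<subseteq> SL3" and curve: "\<And>h1 h2. h1 \<in> X \<Longrightarrow> h2 \<in> X \<Longrightarrow> joined_by_curve X h1 h2"
  shows "zconnected X"
  unfolding zconnected_def
proof
  assume "\<exists>U V. zopen U \<and> zopen V \<and> X \<subseteq> U \<union> V \<and> U \<inter> V \<inter> X = {} \<and> U \<inter> X \<noteq> {} \<and> V \<inter> X \<noteq> {}"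
  then obtain U V where U: "zopen U" and V: "zopen V" and dis: "U \<inter> V \<inter> X = {}"
    and "U \<inter> X \<noteq> {}" "V \<inter> X \<noteq> {}" by blast
  then obtain h1 h2 where h1: "h1 \<in> U" "h1 \<in> X" and h2: "h2 \<in> V" "h2 \<in> X" by blast
  obtain P where P: "P \<subseteq> poly_fun" "SL3 - U = SL3 \<inter> {A. \<forall>p\<in>P. p A = 0}"
    using U unfolding zopen_def zclosed_def by blast
  obtain Q where Q: "Q \<subseteq> poly_fun" "SL3 - V = SL3 \<inter> {A. \<forall>p\<in>Q. p A = 0}"
    using V unfolding zopen_def zclosed_def by blast
  obtain p where p: "p \<in> P" "p h1 \<noteq> 0" using P(2) h1 sub by blast
  obtain q where q: "q \<in> Q" "q h2 \<noteq> 0" using Q(2) h2 sub by blast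
  have pq: "p x * q x = 0" if x: "x \<in> X" for x
  proof (cases "x \<in> U")
    case True
    then have "x \<in> SL3 - V" using dis x sub by blast
    then show ?thesis using Q(2) q by auto
  next
    case False
    then have "x \<in> SL3 - U" using x sub by blast
    then show ?thesis using P(2) p by auto
  qed
  obtain D \<gamma> where c: "poly D 0 \<noteq> 0" "poly D 1 \<noteq> 0" "\<gamma> 0 = h1" "\<gamma> 1 = h2"
    "\<forall>z. poly D z \<noteq> 0 \<longrightarrow> \<gamma> z \<in> X" "\<forall>i j. regular_on D (\<lambda>z. \<gamma> z $ i $ j)"
    using curve[OF h1(2) h2(2)] unfolding joined_by_curve_def by blast
  have "regular_on D (\<lambda>z. p (\<gamma> z))" "regular_on D (\<lambda>z. q (\<gamma> z))"
    using regular_on_poly_fun c(6) p q P(1) Q(1) by blast+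
  then show False
    by (rule regular_product_zero[OF c(1,2)]) (use c p q pq in auto)
qed

lemma zopen_nonvanishing:
  assumes "p \<in> poly_fun"
  shows "zopen {g \<in> SL3. p g \<noteq> 0}"
proof -
  have "SL3 - {g \<in> SL3. p g \<noteq> 0} = SL3 \<inter> {A. \<forall>q\<in>{p}. q A = 0}" by auto
  then show ?thesis unfolding zopen_def zclosed_def using assms by blast
qed

lemma comm_derived: "x \<in> K \<Longrightarrow> y \<in> K \<Longrightarrow> x ** y ** minv x ** minv y \<in> derived K"
  unfolding derived_def by blast

lemma one_derived: "mat 1 \<in> derived K"
  unfolding derived_def msubgroup_def by blast

lemma derived_least:
  assumes "msubgroup M" "\<And>x y. x \<in> K \<Longrightarrow> y \<in> K \<Longrightarrow> x ** y ** minv x ** minv y \<in> M"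
  shows "derived K \<subseteq> M"
  unfolding derived_def using assms by blast

lemma derived_mono: "K \<subseteq> K' \<Longrightarrow> derived K \<subseteq> derived K'"
  unfolding derived_def by blast

lemma msubgroup_derived:
  assumes "K \<subseteq> SL3"
  shows "msubgroup (derived K)"
proof -
  have "x ** y ** minv x ** minv y \<in> SL3" if "x \<in> K" "y \<in> K" for x y
    using that assms by (meson SL3_inv(3) SL3_mult subsetD)
  then have "derived K \<subseteq> SL3" by (rule derived_least[OF msubgroup_SL3])
  then show ?thesis unfolding derived_def msubgroup_def by blast
qed

lemma derived_series_mono: "K \<subseteq> K' \<Longrightarrow> (derived ^^ n) K \<subseteq> (derived ^^ n) K'"
  by (induction n) (auto dest: derived_mono)

lemma msolvable_by_commutators:
  assumes "msubgroup M" "msolvable M"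
    and "\<And>x y. x \<in> K \<Longrightarrow> y \<in> K \<Longrightarrow> x ** y ** minv x ** minv y \<in> M"
  shows "msolvable K"
proof -
  obtain n where n: "(derived ^^ n) M = {mat 1}" using assms(2) unfolding msolvable_def by blast
  have "(derived ^^ Suc n) K = (derived ^^ n) (derived K)" by (simp only: funpow_Suc_right o_def)
  also have "\<dots> \<subseteq> (derived ^^ n) M" by (rule derived_series_mono[OF derived_least[OF assms(1,3)]])
  finally have "(derived ^^ Suc n) K \<subseteq> {mat 1}" using n by simp
  moreover have "mat 1 \<in> (derived ^^ Suc n) K" by (simp add: one_derived)
  ultimately show ?thesis unfolding msolvable_def by blast
qed

lemma msolvable_trivial: "msolvable {mat 1}"
  unfolding msolvable_def by (rule exI[of _ 0]) simp

text \<open>Let \<open>E, F\<close> be one-parameter families in \<open>K\<close>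
  and \<open>d = w(2) w(-1)\<close> the torus element built from them (as for the root subgroups of an
  \<open>SL\<^sub>2\<close>, where \<open>w(t) = E t F (-1/t) E t\<close>). If commutators with \<open>d\<close> triple the parameters,
  then both families survive in every term of the derived series, so \<open>K\<close> is not solvable.\<close>

lemma not_msolvable_root_pair:
  fixes E F :: "complex \<Rightarrow> cmat"
  assumes K: "msubgroup K" and EK: "\<And>c. E c \<in> K" and FK: "\<And>c. F c \<in> K"
    and d: "d = E 2 ** F (-1/2) ** E 2 ** E (-1) ** F 1 ** E (-1)"
    and cE: "\<And>b. E (3*b) = d ** E b ** minv d ** minv (E b)"
    and cF: "\<And>b. F (3*b) = minv d ** F b ** minv (minv d) ** minv (F b)"
    and E1: "E 1 \<noteq> mat 1"
  shows "\<not> msolvable K"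
proof
  have series: "msubgroup ((derived ^^ n) K) \<and> (\<forall>c. E c \<in> (derived ^^ n) K \<and> F c \<in> (derived ^^ n) K)"
    for n
  proof (induction n)
    case 0
    then show ?case using K EK FK by simp
  next
    case (Suc n)
    let ?K = "(derived ^^ n) K"
    from Suc have m: "msubgroup ?K" and EF: "\<And>c. E c \<in> ?K" "\<And>c. F c \<in> ?K" by auto
    have dK: "d \<in> ?K" unfolding d using m EF by (intro msub_mult)
    have "E c \<in> derived ?K" for c
      using comm_derived[OF dK EF(1), of "c/3"] cE[of "c/3"] by simp
    moreover have "F c \<in> derived ?K" for c
      using comm_derived[OF msub_inv[OF m dK] EF(2), of "c/3"] cF[of "c/3"] by simp
    ultimately show ?case using msubgroup_derived[OF msub_SL3[OF m]] by simp
  qed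
  assume "msolvable K"
  then obtain n where "(derived ^^ n) K = {mat 1}" unfolding msolvable_def by blast
  then show False using E1 series[of n] by auto
qed

text \<open>The upper triangular Borel subgroup \<open>B\<close>, its unipotent radical \<open>U\<close>, and the centre
  \<open>Z\<close> of \<open>U\<close>; the chain \<open>B \<supseteq> U \<supseteq> Z \<supseteq> 1\<close> has abelian quotients.\<close>

definition Bgrp :: "cmat set" where
  "Bgrp = {A. A$2$1 = 0 \<and> A$3$1 = 0 \<and> A$3$2 = 0 \<and> A \<in> SL3}"

definition Ugrp :: "cmat set" where
  "Ugrp = {A. A$2$1 = 0 \<and> A$3$1 = 0 \<and> A$3$2 = 0 \<and> A$1$1 = 1 \<and> A$2$2 = 1 \<and> A$3$3 = 1}"

definition Zgrp :: "cmat set" where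
  "Zgrp = {A. A \<in> Ugrp \<and> A$1$2 = 0 \<and> A$2$3 = 0}"

lemma Bgrp_entries:
  assumes "A \<in> Bgrp"
  shows "A$2$1 = 0" "A$3$1 = 0" "A$3$2 = 0" "A$3$3 = inverse (A$1$1 * A$2$2)"
    "A$1$1 \<noteq> 0" "A$2$2 \<noteq> 0" "A \<in> SL3"
proof -
  show z: "A$2$1 = 0" "A$3$1 = 0" "A$3$2 = 0" "A \<in> SL3" using assms by (auto simp: Bgrp_def)
  then have d: "A$1$1 * A$2$2 * A$3$3 = 1" by (simp add: SL3_det)
  then show "A$3$3 = inverse (A$1$1 * A$2$2)" using inverse_unique[OF d] by simp
  show "A$1$1 \<noteq> 0" "A$2$2 \<noteq> 0" using d by auto
qed

lemma Bgrp_eta: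
  assumes "A \<in> Bgrp"
  shows "A = mat3 (A$1$1) (A$1$2) (A$1$3) 0 (A$2$2) (A$2$3) 0 0 (inverse (A$1$1 * A$2$2))"
  using Bgrp_entries[OF assms] by (subst mat3_eta) simp

lemma Ugrp_SL3: "A \<in> Ugrp \<Longrightarrow> A \<in> SL3"
  by (auto simp: Ugrp_def SL3_det)

lemma msubgroup_Bgrp: "msubgroup Bgrp"
  by (rule msubgroupI) (auto simp: Bgrp_def one_SL3 one_entries SL3_mult mult_entry SL3_inv
      minv_entries)

lemma msubgroup_Ugrp: "msubgroup Ugrp"
proof (rule msubgroupI)
  show "Ugrp \<subseteq> SL3" using Ugrp_SL3 by blast
  show "mat 1 \<in> Ugrp" by (simp add: Ugrp_def one_entries)
  show "x ** y \<in> Ugrp" if "x \<in> Ugrp" "y \<in> Ugrp" for x y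
    using that by (simp add: Ugrp_def mult_entry)
  show "minv x \<in> Ugrp" if "x \<in> Ugrp" for x
    using that Ugrp_SL3[OF that] by (simp add: Ugrp_def minv_entries)
qed

lemma msubgroup_Zgrp: "msubgroup Zgrp"
proof (rule msubgroupI)
  show "Zgrp \<subseteq> SL3" using Ugrp_SL3 by (auto simp: Zgrp_def)
  show "mat 1 \<in> Zgrp" by (simp add: Zgrp_def Ugrp_def one_entries)
  show "x ** y \<in> Zgrp" if "x \<in> Zgrp" "y \<in> Zgrp" for x y
    using that by (simp add: Zgrp_def Ugrp_def mult_entry)
  show "minv x \<in> Zgrp" if "x \<in> Zgrp" for x
    using that Ugrp_SL3[of x] by (simp add: Zgrp_def Ugrp_def minv_entries)
qed

lemma msolvable_Bgrp: "msolvable Bgrp"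
proof -
  have "msolvable Zgrp"
  proof (rule msolvable_by_commutators[OF msubgroup_one msolvable_trivial])
    show "x ** y ** minv x ** minv y \<in> {mat 1}" if "x \<in> Zgrp" "y \<in> Zgrp" for x y
      using that Ugrp_SL3[of x] Ugrp_SL3[of y]
      by (simp add: Zgrp_def Ugrp_def cmat_eq_iff forall_3 one_entries mult_entry minv_entries)
  qed
  then have "msolvable Ugrp"
  proof (rule msolvable_by_commutators[OF msubgroup_Zgrp])
    show "x ** y ** minv x ** minv y \<in> Zgrp" if "x \<in> Ugrp" "y \<in> Ugrp" for x y
      using that Ugrp_SL3[OF that(1)] Ugrp_SL3[OF that(2)]
      by (simp add: Ugrp_def Zgrp_def mult_entry minv_entries algebra_simps)
  qed
  then show ?thesis
  proof (rule msolvable_by_commutators[OF msubgroup_Ugrp])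
    show "x ** y ** minv x ** minv y \<in> Ugrp" if "x \<in> Bgrp" "y \<in> Bgrp" for x y
      by (simp add: Ugrp_def mult_entry minv_entries Bgrp_entries that field_simps)
  qed
qed

lemma zclosed_Bgrp: "zclosed Bgrp"
  unfolding zclosed_def
proof (intro exI conjI)
  let ?P = "{(\<lambda>A. A$2$1), (\<lambda>A. A$3$1), (\<lambda>A. A$3$2)}"
  show "?P \<subseteq> poly_fun" by (auto intro: poly_fun.intros)
  show "Bgrp = SL3 \<inter> {A. \<forall>p\<in>?P. p A = 0}" by (auto simp: Bgrp_def)
qed

text \<open>\<open>B\<close> is connected: two of its points are joined by the straight line between them, the
  entry \<open>(3,3)\<close> being the inverse of the product of the (linear) diagonal entries.\<close>

lemma zconnected_Bgrp: "zconnected Bgrp"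
proof (rule zconnected_by_curves)
  show "Bgrp \<subseteq> SL3" by (auto simp: Bgrp_def)
  fix h1 h2 assume h1: "h1 \<in> Bgrp" and h2: "h2 \<in> Bgrp"
  define S where "S = [:h1$1$1, h2$1$1 - h1$1$1:]"
  define T where "T = [:h1$2$2, h2$2$2 - h1$2$2:]"
  define D where "D = S * T"
  define \<gamma> where "\<gamma> = (\<lambda>z. mat3 (poly S z) (poly [:h1$1$2, h2$1$2 - h1$1$2:] z)
     (poly [:h1$1$3, h2$1$3 - h1$1$3:] z) 0 (poly T z) (poly [:h1$2$3, h2$2$3 - h1$2$3:] z)
     0 0 (inverse (poly D z)))"
  note e1 = Bgrp_entries[OF h1] and e2 = Bgrp_entries[OF h2]
  have at1: "poly S 1 = h2$1$1" "poly T 1 = h2$2$2" by (simp_all add: S_def T_def)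
  then have "poly D 1 \<noteq> 0" using e2 by (simp add: D_def)
  moreover have "poly D 0 \<noteq> 0" using e1 by (simp add: D_def S_def T_def)
  moreover have "\<gamma> 0 = h1"
    by (subst Bgrp_eta[OF h1]) (simp add: \<gamma>_def D_def S_def T_def mult.commute)
  moreover have "\<gamma> 1 = h2"
    using at1 by (subst Bgrp_eta[OF h2]) (simp add: \<gamma>_def D_def mult.commute)
  moreover have "\<gamma> z \<in> Bgrp" if "poly D z \<noteq> 0" for z
    using that by (simp add: \<gamma>_def Bgrp_def SL3_def mat3_det D_def field_simps)
  moreover have "regular_on D (\<lambda>z. \<gamma> z $ i $ j)" for i j
    unfolding \<gamma>_def by (intro regular_on_mat3 regular_on_const regular_on_poly regular_on_inverse)
  ultimately show "joined_by_curve Bgrp h1 h2" unfolding joined_by_curve_def by blast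
qed

definition E12 :: "complex \<Rightarrow> cmat" where "E12 c = mat3 1 c 0 0 1 0 0 0 1"
definition E21 :: "complex \<Rightarrow> cmat" where "E21 c = mat3 1 0 0 c 1 0 0 0 1"
definition E13 :: "complex \<Rightarrow> cmat" where "E13 c = mat3 1 0 c 0 1 0 0 0 1"
definition E31 :: "complex \<Rightarrow> cmat" where "E31 c = mat3 1 0 0 0 1 0 c 0 1"
definition E23 :: "complex \<Rightarrow> cmat" where "E23 c = mat3 1 0 0 0 1 c 0 0 1"
definition E32 :: "complex \<Rightarrow> cmat" where "E32 c = mat3 1 0 0 0 1 0 0 c 1"
definition dg :: "complex \<Rightarrow> complex \<Rightarrow> complex \<Rightarrow> cmat" where "dg a b c = mat3 a 0 0 0 b 0 0 0 c"
definition Elow :: "complex \<Rightarrow> complex \<Rightarrow> cmat" where "Elow a b = mat3 1 0 0 0 1 0 a b 1"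

lemmas Edefs = E12_def E21_def E13_def E31_def E23_def E32_def dg_def Elow_def

lemma minv_E:
  "minv (E12 c) = E12 (-c)" "minv (E21 c) = E21 (-c)" "minv (E13 c) = E13 (-c)"
  "minv (E31 c) = E31 (-c)" "minv (E23 c) = E23 (-c)" "minv (E32 c) = E32 (-c)"
  "minv (Elow a b) = Elow (-a) (-b)"
  by (rule minv_unique; simp add: Edefs mat3_mult mat3_one)+

lemma minv_dg:
  "a \<noteq> 0 \<Longrightarrow> b \<noteq> 0 \<Longrightarrow> c \<noteq> 0 \<Longrightarrow> minv (dg a b c) = dg (inverse a) (inverse b) (inverse c)"
  by (rule minv_unique; simp add: Edefs mat3_mult mat3_one)

lemma dg_Bgrp: "a * b * c = 1 \<Longrightarrow> dg a b c \<in> Bgrp"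
  by (simp add: Bgrp_def dg_def SL3_def mat3_det)

lemma E_Bgrp: "E12 c \<in> Bgrp" "E13 c \<in> Bgrp" "E23 c \<in> Bgrp"
  by (simp_all add: Bgrp_def Edefs SL3_def mat3_det)

text \<open>A subgroup containing the root groups \<open>E\<^sub>i\<^sub>j\<close> and \<open>E\<^sub>j\<^sub>i\<close> is not solvable; \<open>d\<close> is the torus
  element \<open>diag(2, 1/2)\<close> of the corresponding \<open>SL\<^sub>2\<close>.\<close>

lemma not_msolvable_12: "msubgroup K \<Longrightarrow> (\<And>c. E12 c \<in> K) \<Longrightarrow> (\<And>c. E21 c \<in> K) \<Longrightarrow> \<not> msolvable K"
  by (rule not_msolvable_root_pair[where E = E12 and F = E21 and d = "dg 2 (1/2) 1"])
     (simp_all add: minv_E minv_dg, simp_all add: Edefs mat3_mult mat3_one mat3_eq)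

lemma not_msolvable_13: "msubgroup K \<Longrightarrow> (\<And>c. E13 c \<in> K) \<Longrightarrow> (\<And>c. E31 c \<in> K) \<Longrightarrow> \<not> msolvable K"
  by (rule not_msolvable_root_pair[where E = E13 and F = E31 and d = "dg 2 1 (1/2)"])
     (simp_all add: minv_E minv_dg, simp_all add: Edefs mat3_mult mat3_one mat3_eq)

lemma not_msolvable_23: "msubgroup K \<Longrightarrow> (\<And>c. E23 c \<in> K) \<Longrightarrow> (\<And>c. E32 c \<in> K) \<Longrightarrow> \<not> msolvable K"
  by (rule not_msolvable_root_pair[where E = E23 and F = E32 and d = "dg 1 2 (1/2)"])
     (simp_all add: minv_E minv_dg, simp_all add: Edefs mat3_mult mat3_one mat3_eq)

lemma family_by_scaling:
  fixes E :: "complex \<Rightarrow> cmat"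
  assumes L: "msubgroup L" and E0: "E 0 = mat 1" and c0: "E c0 \<in> L" "c0 \<noteq> 0"
    and scale: "\<And>l. l \<noteq> 0 \<Longrightarrow> \<exists>d\<in>L. d ** E c0 ** minv d = E (l * c0)"
  shows "E c \<in> L"
proof (cases "c = 0")
  case True
  then show ?thesis using E0 msub_one[OF L] by simp
next
  case False
  then obtain d where d: "d \<in> L" "d ** E c0 ** minv d = E (c / c0 * c0)"
    using scale[of "c / c0"] c0 by auto
  then have "E c = d ** E c0 ** minv d" using c0(2) by simp
  then show ?thesis using msub_conj[OF L d(1) c0(1)] by simp
qed

lemma dg_conj_negative_roots:
  assumes "a \<noteq> 0" "b \<noteq> 0" "c \<noteq> 0"
  shows "dg a b c ** E31 x ** minv (dg a b c) = E31 (c / a * x)"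
    and "dg a b c ** E32 x ** minv (dg a b c) = E32 (c / b * x)"
    and "dg a b c ** E21 x ** minv (dg a b c) = E21 (b / a * x)"
  using assms by (simp_all add: minv_dg) (simp_all add: Edefs mat3_mult field_simps)

lemma negative_root_by_scaling:
  assumes L: "msubgroup L" "Bgrp \<subseteq> L"
  shows "E31 c0 \<in> L \<Longrightarrow> c0 \<noteq> 0 \<Longrightarrow> E31 c \<in> L"
    and "E32 c0 \<in> L \<Longrightarrow> c0 \<noteq> 0 \<Longrightarrow> E32 c \<in> L"
    and "E21 c0 \<in> L \<Longrightarrow> c0 \<noteq> 0 \<Longrightarrow> E21 c \<in> L"
proof -
  have dL: "dg a b c \<in> L" if "a * b * c = 1" for a b c using L(2) dg_Bgrp[OF that] by blast
  show "E31 c0 \<in> L \<Longrightarrow> c0 \<noteq> 0 \<Longrightarrow> E31 c \<in> L"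
  proof (rule family_by_scaling[OF L(1)])
    show "\<exists>d\<in>L. d ** E31 c0 ** minv d = E31 (l * c0)" if "l \<noteq> 0" for l
      using that dL[of 1 "inverse l" l] dg_conj_negative_roots(1)[of 1 "inverse l" l] by auto
  qed (simp add: Edefs mat3_one)
  show "E32 c0 \<in> L \<Longrightarrow> c0 \<noteq> 0 \<Longrightarrow> E32 c \<in> L"
  proof (rule family_by_scaling[OF L(1)])
    show "\<exists>d\<in>L. d ** E32 c0 ** minv d = E32 (l * c0)" if "l \<noteq> 0" for l
      using that dL[of "inverse l" 1 l] dg_conj_negative_roots(2)[of "inverse l" 1 l] by auto
  qed (simp add: Edefs mat3_one)
  show "E21 c0 \<in> L \<Longrightarrow> c0 \<noteq> 0 \<Longrightarrow> E21 c \<in> L"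
  proof (rule family_by_scaling[OF L(1)])
    show "\<exists>d\<in>L. d ** E21 c0 ** minv d = E21 (l * c0)" if "l \<noteq> 0" for l
      using that dL[of 1 l "inverse l"] dg_conj_negative_roots(3)[of 1 l "inverse l"] by auto
  qed (simp add: Edefs mat3_one)
qed

text \<open>A nontrivial element of the last-row group inside \<open>L \<supseteq> B\<close> yields, after conjugating by
  torus elements and forming a quotient, a nontrivial element of \<open>E\<^sub>3\<^sub>1\<close> or \<open>E\<^sub>3\<^sub>2\<close>, hence a full
  opposite root pair; so \<open>L\<close> is not solvable.\<close>

lemma lower_row_split:
  assumes L: "msubgroup L" "Bgrp \<subseteq> L" and n: "Elow a b \<in> L"
  shows "E31 (3*a/4) \<in> L" "E32 (3*b/4) \<in> L"
proof -
  have d1: "dg 1 2 (1/2) \<in> L" and d2: "dg 2 1 (1/2) \<in> L" using L(2) dg_Bgrp by auto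
  have "dg 2 1 (1/2) ** Elow a b ** minv (dg 2 1 (1/2)) = Elow (a/4) (b/2)"
    by (simp add: minv_dg) (simp add: Edefs mat3_mult mat3_eq)
  then have p: "Elow (a/4) (b/2) \<in> L" using msub_conj[OF L(1) d2 n] by simp
  have "dg 1 2 (1/2) ** Elow a b ** minv (dg 1 2 (1/2)) = Elow (a/2) (b/4)"
    by (simp add: minv_dg) (simp add: Edefs mat3_mult mat3_eq)
  then have q: "Elow (a/2) (b/4) \<in> L" using msub_conj[OF L(1) d1 n] by simp
  have "Elow (a/2) (b/4) ** Elow (a/2) (b/4) ** minv (Elow (a/4) (b/2)) = E31 (3*a/4)"
    by (simp add: minv_E) (simp add: Edefs mat3_mult mat3_eq)
  then show "E31 (3*a/4) \<in> L" using L(1) p q by (metis msub_mult msub_inv)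
  have "Elow (a/4) (b/2) ** Elow (a/4) (b/2) ** minv (Elow (a/2) (b/4)) = E32 (3*b/4)"
    by (simp add: minv_E) (simp add: Edefs mat3_mult mat3_eq)
  then show "E32 (3*b/4) \<in> L" using L(1) p q by (metis msub_mult msub_inv)
qed

lemma lower_row_trivial:
  assumes L: "msubgroup L" "msolvable L" "Bgrp \<subseteq> L" and n: "Elow a b \<in> L"
  shows "a = 0 \<and> b = 0"
proof (rule ccontr)
  assume ab: "\<not> (a = 0 \<and> b = 0)"
  note split = lower_row_split[OF L(1,3) n]
  show False
  proof (cases "a = 0")
    case False
    then have "E31 c \<in> L" for c using negative_root_by_scaling(1)[OF L(1,3) split(1)] by simp
    then show False using not_msolvable_13[OF L(1)] L(2,3) E_Bgrp(2) by blast
  next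
    case True
    with ab have "E32 c \<in> L" for c using negative_root_by_scaling(2)[OF L(1,3) split(2)] by simp
    then show False using not_msolvable_23[OF L(1)] L(2,3) E_Bgrp(3) by blast
  qed
qed

lemma conj_E13_lower:
  assumes y: "y \<in> SL3" and z: "y$1$1 = 0" "y$2$1 = 0"
  shows "y ** E13 1 ** minv y = Elow (-(y$3$1^2 * y$2$2)) (y$3$1^2 * y$1$2)"
  using y z unfolding cmat_eq_iff forall_3
  by (simp add: mult_entry minv_entries Edefs power2_eq_square SL3_det) (simp_all add: algebra_simps)

lemma conj_E23_lower:
  assumes y: "y \<in> SL3" and z: "y$1$2 = 0" "y$2$2 = 0" "y$3$1 = 0"
  shows "y ** E23 1 ** minv y = Elow (y$3$2^2 * y$2$1) (-(y$3$2^2 * y$1$1))"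
  using y z unfolding cmat_eq_iff forall_3
  by (simp add: mult_entry minv_entries Edefs power2_eq_square SL3_det) (simp_all add: algebra_simps)

lemma conj_E12_lower:
  assumes y: "y \<in> SL3" and z: "y$1$1 = 0" "y$3$1 = 0" "y$3$2 = 0"
  shows "y ** E12 1 ** minv y = E21 (-(y$2$1^2 * y$3$3)) ** E23 (y$2$1^2 * y$1$3)"
  using y z unfolding cmat_eq_iff forall_3
  by (simp add: mult_entry minv_entries Edefs power2_eq_square SL3_det mat3_mult)
     (simp_all add: algebra_simps)

text \<open>The three lower entries are treated in turn; in each case left multiplication
  by an element of \<open>B\<close> clears part of a column of \<open>g\<close>, and conjugating an upper root element
  by the result gives a nontrivial lower triangular element of \<open>L\<close>, which is impossible.\<close>

lemma solvable_over_Bgrp_left_mult: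
  assumes L: "msubgroup L" "Bgrp \<subseteq> L" and b: "b \<in> Bgrp" and g: "g \<in> L"
  shows "b ** g \<in> L" "b ** g \<in> SL3"
  using msub_mult[OF L(1) _ g] msub_SL3[OF L(1)] L(2) b by blast+

lemma solvable_over_Bgrp_entry31:
  assumes L: "msubgroup L" "msolvable L" "Bgrp \<subseteq> L" and g: "g \<in> L"
  shows "g$3$1 = 0"
proof (rule ccontr)
  assume g31: "g$3$1 \<noteq> 0"
  define y where "y = mat3 1 0 (-(g$1$1/g$3$1)) 0 1 (-(g$2$1/g$3$1)) 0 0 1 ** g"
  have yL: "y \<in> L" "y \<in> SL3"
    unfolding y_def by (rule solvable_over_Bgrp_left_mult[OF L(1,3) _ g],
      simp add: Bgrp_def SL3_def mat3_det)+
  have yz: "y$1$1 = 0" "y$2$1 = 0" "y$3$1 \<noteq> 0" using g31 by (simp_all add: y_def mult_entry)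
  have "y ** E13 1 ** minv y \<in> L" using msub_conj[OF L(1) yL(1)] E_Bgrp(2) L(3) by blast
  then have "Elow (-(y$3$1^2 * y$2$2)) (y$3$1^2 * y$1$2) \<in> L" using conj_E13_lower[OF yL(2) yz(1,2)] by simp
  then have "-(y$3$1^2 * y$2$2) = 0 \<and> y$3$1^2 * y$1$2 = 0" by (rule lower_row_trivial[OF L])
  then have "y$2$2 = 0" "y$1$2 = 0" using yz(3) by auto
  then show False using yL(2) yz by (simp add: SL3_det)
qed

lemma solvable_over_Bgrp_entry32:
  assumes L: "msubgroup L" "msolvable L" "Bgrp \<subseteq> L" and g: "g \<in> L"
  shows "g$3$2 = 0"
proof (rule ccontr)
  assume g32: "g$3$2 \<noteq> 0"
  have g31: "g$3$1 = 0" by (rule solvable_over_Bgrp_entry31[OF L g])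
  define y where "y = mat3 1 0 (-(g$1$2/g$3$2)) 0 1 (-(g$2$2/g$3$2)) 0 0 1 ** g"
  have yL: "y \<in> L" "y \<in> SL3"
    unfolding y_def by (rule solvable_over_Bgrp_left_mult[OF L(1,3) _ g],
      simp add: Bgrp_def SL3_def mat3_det)+
  have yz: "y$1$2 = 0" "y$2$2 = 0" "y$3$1 = 0" "y$3$2 \<noteq> 0"
    using g31 g32 by (simp_all add: y_def mult_entry)
  have "y ** E23 1 ** minv y \<in> L" using msub_conj[OF L(1) yL(1)] E_Bgrp(3) L(3) by blast
  then have "Elow (y$3$2^2 * y$2$1) (-(y$3$2^2 * y$1$1)) \<in> L" using conj_E23_lower[OF yL(2) yz(1-3)] by simp
  then have "y$3$2^2 * y$2$1 = 0 \<and> -(y$3$2^2 * y$1$1) = 0" by (rule lower_row_trivial[OF L])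
  then have "y$2$1 = 0" "y$1$1 = 0" using yz(4) by auto
  then show False using yL(2) yz by (simp add: SL3_det)
qed

lemma solvable_over_Bgrp_entry21:
  assumes L: "msubgroup L" "msolvable L" "Bgrp \<subseteq> L" and g: "g \<in> L"
  shows "g$2$1 = 0"
proof (rule ccontr)
  assume g21: "g$2$1 \<noteq> 0"
  have g3: "g$3$1 = 0" "g$3$2 = 0"
    by (rule solvable_over_Bgrp_entry31[OF L g], rule solvable_over_Bgrp_entry32[OF L g])
  define y where "y = mat3 1 (-(g$1$1/g$2$1)) 0 0 1 0 0 0 1 ** g"
  have yL: "y \<in> L" "y \<in> SL3"
    unfolding y_def by (rule solvable_over_Bgrp_left_mult[OF L(1,3) _ g],
      simp add: Bgrp_def SL3_def mat3_det)+
  have yz: "y$1$1 = 0" "y$3$1 = 0" "y$3$2 = 0" "y$2$1 \<noteq> 0"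
    using g21 g3 by (simp_all add: y_def mult_entry)
  let ?a = "-(y$2$1^2 * y$3$3)" and ?c = "y$2$1^2 * y$1$3"
  have "y ** E12 1 ** minv y \<in> L" using msub_conj[OF L(1) yL(1)] E_Bgrp(1) L(3) by blast
  then have "E21 ?a ** E23 ?c ** E23 (- ?c) \<in> L"
    using conj_E12_lower[OF yL(2) yz(1-3)] msub_mult[OF L(1)] L(3) E_Bgrp(3) by auto
  then have e: "E21 ?a \<in> L" by (simp add: Edefs mat3_mult)
  have "y$3$3 \<noteq> 0" using yL(2) yz by (auto simp: SL3_det)
  then have "E21 c \<in> L" for c using negative_root_by_scaling(3)[OF L(1,3) e] yz(4) by simp
  then show False using not_msolvable_12[OF L(1)] L(2,3) E_Bgrp(1) by blast
qed

lemma Bgrp_maximal: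
  assumes L: "msubgroup L" "msolvable L" "Bgrp \<subseteq> L"
  shows "L \<subseteq> Bgrp"
proof
  fix g assume g: "g \<in> L"
  have "g \<in> SL3" using g msub_SL3[OF L(1)] by blast
  then show "g \<in> Bgrp" unfolding Bgrp_def
    using solvable_over_Bgrp_entry31[OF L g] solvable_over_Bgrp_entry32[OF L g]
      solvable_over_Bgrp_entry21[OF L g] by blast
qed

lemma borel_Bgrp: "borel Bgrp"
  unfolding borel_def closed_subgroup_def
  using msubgroup_Bgrp zclosed_Bgrp zconnected_Bgrp msolvable_Bgrp Bgrp_maximal
  unfolding closed_subgroup_def by blast

lemma Hgrp_char:
  "A \<in> Hgrp \<longleftrightarrow> A$2$1 = 0 \<and> A$3$1 = 0 \<and> A$3$2 = 0 \<and> A$1$2 = 0 \<and> A$2$2 = 1 \<and> A \<in> SL3"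
proof
  assume "A \<in> Hgrp"
  then obtain t a b where "t \<noteq> 0" "A = mat3 t 0 a 0 1 b 0 0 (inverse t)" unfolding Hgrp_def by blast
  then show "A$2$1 = 0 \<and> A$3$1 = 0 \<and> A$3$2 = 0 \<and> A$1$2 = 0 \<and> A$2$2 = 1 \<and> A \<in> SL3"
    by (simp add: SL3_def mat3_det)
next
  assume A: "A$2$1 = 0 \<and> A$3$1 = 0 \<and> A$3$2 = 0 \<and> A$1$2 = 0 \<and> A$2$2 = 1 \<and> A \<in> SL3"
  then have d: "A$1$1 * A$3$3 = 1" by (auto simp: SL3_det)
  have "A = mat3 (A$1$1) 0 (A$1$3) 0 1 (A$2$3) 0 0 (inverse (A$1$1))"
    using A inverse_unique[OF d] by (subst mat3_eta) simp
  moreover have "A$1$1 \<noteq> 0" using d by auto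
  ultimately show "A \<in> Hgrp" unfolding Hgrp_def by blast
qed

lemma Hgrp_entries:
  assumes "A \<in> Hgrp"
  shows "A$2$1 = 0" "A$3$1 = 0" "A$3$2 = 0" "A$1$2 = 0" "A$2$2 = 1"
    "A$3$3 = inverse (A$1$1)" "A$1$1 \<noteq> 0" "A \<in> SL3"
proof -
  obtain t a b where "t \<noteq> 0" "A = mat3 t 0 a 0 1 b 0 0 (inverse t)"
    using assms unfolding Hgrp_def by blast
  then show "A$2$1 = 0" "A$3$1 = 0" "A$3$2 = 0" "A$1$2 = 0" "A$2$2 = 1"
    "A$3$3 = inverse (A$1$1)" "A$1$1 \<noteq> 0" by simp_all
  show "A \<in> SL3" using assms Hgrp_char by blast
qed

lemma Ngrp_char:
  "A \<in> Ngrp \<longleftrightarrow> A$2$1 = 0 \<and> A$3$1 = 0 \<and> A$3$2 = 0 \<and> A$1$2 = 0 \<and> A$1$1 = 1 \<and> A$2$2 = 1 \<and> A$3$3 = 1"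
  unfolding Ngrp_def by (subst (1 2) mat3_eta) (auto simp: mat3_eq)

lemma Ngrp_SL3: "A \<in> Ngrp \<Longrightarrow> A \<in> SL3"
  by (auto simp: Ngrp_char SL3_det)

lemma msubgroup_Hgrp: "msubgroup Hgrp"
proof (rule msubgroupI)
  show "Hgrp \<subseteq> SL3" by (auto simp: Hgrp_char)
  show "mat 1 \<in> Hgrp" by (simp add: Hgrp_char one_SL3 one_entries)
  show "x ** y \<in> Hgrp" if "x \<in> Hgrp" "y \<in> Hgrp" for x y
    using that by (simp add: Hgrp_char SL3_mult mult_entry)
  show "minv x \<in> Hgrp" if "x \<in> Hgrp" for x
    using that by (auto simp: Hgrp_char SL3_inv minv_entries SL3_det mult.commute)
qed

lemma msubgroup_Ngrp: "msubgroup Ngrp"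
proof (rule msubgroupI)
  show "Ngrp \<subseteq> SL3" using Ngrp_SL3 by blast
  show "mat 1 \<in> Ngrp" by (simp add: Ngrp_char one_entries)
  show "x ** y \<in> Ngrp" if "x \<in> Ngrp" "y \<in> Ngrp" for x y
    using that by (simp add: Ngrp_char mult_entry)
  show "minv x \<in> Ngrp" if "x \<in> Ngrp" for x
    using that Ngrp_SL3[OF that] by (simp add: Ngrp_char minv_entries)
qed

lemma zclosed_Hgrp: "zclosed Hgrp"
  unfolding zclosed_def
proof (intro exI conjI)
  let ?P = "{(\<lambda>A. A$2$1), (\<lambda>A. A$3$1), (\<lambda>A. A$3$2), (\<lambda>A. A$1$2), (\<lambda>A. A$2$2 + (-1))}"
  have "(\<lambda>A. A$2$2 + (-1)) \<in> poly_fun" by (intro poly_fun.intros)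
  then show "?P \<subseteq> poly_fun" by (auto intro: poly_fun.intros)
  show "Hgrp = SL3 \<inter> {A. \<forall>p\<in>?P. p A = 0}" by (auto simp: Hgrp_char)
qed

text \<open>\<open>H\<close> is solvable: its commutators lie in the abelian group \<open>N\<close>.\<close>

lemma msolvable_Hgrp: "msolvable Hgrp"
proof (rule msolvable_by_commutators[OF msubgroup_Ngrp])
  show "msolvable Ngrp"
  proof (rule msolvable_by_commutators[OF msubgroup_one msolvable_trivial])
    show "x ** y ** minv x ** minv y \<in> {mat 1}" if "x \<in> Ngrp" "y \<in> Ngrp" for x y
      using that Ngrp_SL3[OF that(1)] Ngrp_SL3[OF that(2)]
      by (simp add: Ngrp_char cmat_eq_iff forall_3 one_entries mult_entry minv_entries)
  qed
  show "x ** y ** minv x ** minv y \<in> Ngrp" if "x \<in> Hgrp" "y \<in> Hgrp" for x y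
    using Hgrp_entries[OF that(1)] Hgrp_entries[OF that(2)]
    by (simp add: Ngrp_char mult_entry minv_entries) (simp add: field_simps)
qed

text \<open>\<open>H\<close> is connected: it is the image of the line segment of parameters \<open>(t, a, b)\<close>.\<close>

lemma zconnected_Hgrp: "zconnected Hgrp"
proof (rule zconnected_by_curves)
  show "Hgrp \<subseteq> SL3" by (auto simp: Hgrp_char)
  fix h1 h2 assume "h1 \<in> Hgrp" "h2 \<in> Hgrp"
  then obtain t1 a1 b1 t2 a2 b2 where t: "t1 \<noteq> 0" "t2 \<noteq> 0"
    and h: "h1 = mat3 t1 0 a1 0 1 b1 0 0 (inverse t1)" "h2 = mat3 t2 0 a2 0 1 b2 0 0 (inverse t2)"
    unfolding Hgrp_def by blast
  define D where "D = [:t1, t2 - t1:]"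
  define \<gamma> where "\<gamma> = (\<lambda>z. mat3 (poly D z) 0 (poly [:a1, a2 - a1:] z) 0 1 (poly [:b1, b2 - b1:] z)
     0 0 (inverse (poly D z)))"
  have "poly D 0 \<noteq> 0" "poly D 1 \<noteq> 0" using t by (simp_all add: D_def)
  moreover have "\<gamma> 0 = h1" "\<gamma> 1 = h2" by (simp_all add: \<gamma>_def D_def h)
  moreover have "\<gamma> z \<in> Hgrp" if "poly D z \<noteq> 0" for z
    unfolding \<gamma>_def Hgrp_def using that by blast
  moreover have "regular_on D (\<lambda>z. \<gamma> z $ i $ j)" for i j
    unfolding \<gamma>_def by (intro regular_on_mat3 regular_on_const regular_on_poly regular_on_inverse)
  ultimately show "joined_by_curve Hgrp h1 h2" unfolding joined_by_curve_def by blast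
qed

text \<open>With base point \<open>x\<^sub>0\<close> the double coset \<open>B x\<^sub>0 H\<close> is exactly the locus
  where \<open>f(g) = g\<^sub>3\<^sub>1 g\<^sub>3\<^sub>2 (g\<^sub>2\<^sub>1 g\<^sub>3\<^sub>2 - g\<^sub>2\<^sub>2 g\<^sub>3\<^sub>1)\<close> does not vanish, hence it is open.
  For the hard inclusion, \<open>g\<close> is reduced to \<open>B x\<^sub>0\<close> by solving a 2x2 linear system for
  an element \<open>h \<in> H\<close> with \<open>g h x\<^sub>0\<^sup>-\<^sup>1 \<in> B\<close>.\<close>

definition x0 :: cmat where "x0 = mat3 0 0 1 1 0 0 1 1 0"

definition orbit_poly :: "cmat \<Rightarrow> complex" where
  "orbit_poly g = g$3$1 * g$3$2 * (g$2$1 * g$3$2 - g$2$2 * g$3$1)"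

lemma orbit_poly_poly_fun: "orbit_poly \<in> poly_fun"
proof -
  have "(\<lambda>g. g$3$1 * g$3$2 * (g$2$1 * g$3$2 + (-1) * (g$2$2 * g$3$1))) \<in> poly_fun"
    by (intro poly_fun.intros)
  then show ?thesis by (simp add: orbit_poly_def[abs_def])
qed

lemma x0_SL3: "x0 \<in> SL3"
  by (simp add: x0_def SL3_def mat3_det)

lemma orbit_poly_on_orbit:
  assumes "b \<in> Bgrp" "h \<in> Hgrp"
  shows "orbit_poly (b ** x0 ** h) \<noteq> 0"
  using Hgrp_entries[OF assms(2)] Bgrp_entries[OF assms(1)]
  by (simp add: orbit_poly_def mult_entry x0_def)

lemma orbit_poly_off_orbit:
  assumes g: "g \<in> SL3" and f: "orbit_poly g \<noteq> 0"
  shows "\<exists>b h. g = b ** x0 ** h \<and> b \<in> Bgrp \<and> h \<in> Hgrp"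
proof -
  have g31: "g$3$1 \<noteq> 0" and g32: "g$3$2 \<noteq> 0" and \<Delta>0: "g$3$1 * g$2$2 - g$3$2 * g$2$1 \<noteq> 0"
    using f by (auto simp: orbit_poly_def algebra_simps)
  define \<Delta> where "\<Delta> = g$3$1 * g$2$2 - g$3$2 * g$2$1"
  define t where "t = g$3$2 / g$3$1"
  define r1 where "r1 = - g$3$3 / t"
  define r2 where "r2 = - g$2$3 / t"
  define a where "a = (r1 * g$2$2 - g$3$2 * r2) / \<Delta>"
  define c where "c = (g$3$1 * r2 - g$2$1 * r1) / \<Delta>"
  define h where "h = mat3 t 0 a 0 1 c 0 0 (inverse t)"
  define b where "b = g ** h ** mat3 0 1 0 0 (-1) 1 1 0 0"
  have t0: "t \<noteq> 0" using g31 g32 by (simp add: t_def)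
  have hH: "h \<in> Hgrp" unfolding h_def Hgrp_def using t0 by blast
  have hS: "h \<in> SL3" using hH Hgrp_char by blast
  text \<open>Cramer's rule for the system in \<open>(a, c)\<close>; it kills the entries \<open>(2,1), (3,1)\<close> of \<open>b\<close>.\<close>
  have "g$3$1 * a + g$3$2 * c = (r1 * \<Delta>) / \<Delta>" "g$2$1 * a + g$2$2 * c = (r2 * \<Delta>) / \<Delta>"
    by (simp_all add: a_def c_def \<Delta>_def add_divide_distrib[symmetric] algebra_simps)
  then have "g$3$1 * a + g$3$2 * c = r1" "g$2$1 * a + g$2$2 * c = r2"
    using \<Delta>0 by (simp_all add: \<Delta>_def)
  then have lin: "g$2$1 * a + g$2$2 * c + g$2$3 * inverse t = 0"
    "g$3$1 * a + g$3$2 * c + g$3$3 * inverse t = 0"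
    using t0 unfolding r1_def r2_def by (simp_all add: field_simps)
  have "b \<in> SL3" unfolding b_def using g hS by (intro SL3_mult) (simp_all add: SL3_def mat3_det)
  then have bB: "b \<in> Bgrp"
    using lin g31 by (simp add: Bgrp_def b_def mult_entry h_def t_def algebra_simps)
  have "b ** x0 ** minv h = g ** h ** (mat3 0 1 0 0 (-1) 1 1 0 0 ** x0) ** minv h"
    by (simp add: b_def matrix_mul_assoc)
  also have "\<dots> = g ** (h ** minv h)" by (simp add: x0_def mat3_mult matrix_mul_assoc flip: mat3_one)
  finally have "g = b ** x0 ** minv h" using SL3_inv(1)[OF hS] by simp
  then show ?thesis using bB msub_inv[OF msubgroup_Hgrp hH] by blast
qed

lemma spherical_Hgrp: "spherical Hgrp"
proof -
  have "b ** x0 ** h \<in> SL3" if "b \<in> Bgrp" "h \<in> Hgrp" for b h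
    using that x0_SL3 by (metis SL3_mult Bgrp_entries(7) Hgrp_entries(8))
  then have "{b ** x0 ** h | b h. b \<in> Bgrp \<and> h \<in> Hgrp} = {g \<in> SL3. orbit_poly g \<noteq> 0}"
    using orbit_poly_on_orbit orbit_poly_off_orbit by auto
  then have "zopen {b ** x0 ** h | b h. b \<in> Bgrp \<and> h \<in> Hgrp}"
    using zopen_nonvanishing[OF orbit_poly_poly_fun] by simp
  then show ?thesis
    unfolding spherical_def closed_subgroup_def
    using msubgroup_Hgrp zclosed_Hgrp borel_Bgrp x0_SL3 by blast
qed

definition Mgrp :: "cmat set" where
  "Mgrp = {A. A$2$1 = 0 \<and> A$3$1 = 0 \<and> A$3$2 = 0 \<and> A$1$2 = 0 \<and> A \<in> SL3}"

lemma Mgrp_entries: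
  assumes "m \<in> Mgrp"
  shows "m$2$1 = 0" "m$3$1 = 0" "m$3$2 = 0" "m$1$2 = 0" "m$1$1 * m$2$2 * m$3$3 = 1" "m \<in> SL3"
  using assms by (auto simp: Mgrp_def SL3_det)

lemma msubgroup_Mgrp: "msubgroup Mgrp"
  by (rule msubgroupI) (auto simp: Mgrp_def one_SL3 one_entries SL3_mult mult_entry SL3_inv
      minv_entries)

lemma Mgrp_eq_TN: "{t ** n | t n. t \<in> Tdiag \<and> n \<in> Ngrp} = Mgrp"
proof
  show "{t ** n | t n. t \<in> Tdiag \<and> n \<in> Ngrp} \<subseteq> Mgrp"
  proof clarify
    fix t n assume "t \<in> Tdiag" "n \<in> Ngrp"
    then obtain s1 t1 u1 a b where "s1 * t1 * u1 = 1" "t = mat3 s1 0 0 0 t1 0 0 0 u1"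
      "n = mat3 1 0 a 0 1 b 0 0 1"
      unfolding Tdiag_def Ngrp_def by blast
    then show "t ** n \<in> Mgrp" by (simp add: Mgrp_def mat3_mult SL3_def mat3_det)
  qed
  show "Mgrp \<subseteq> {t ** n | t n. t \<in> Tdiag \<and> n \<in> Ngrp}"
  proof
    fix A assume A: "A \<in> Mgrp"
    note e = Mgrp_entries[OF A]
    have nz: "A$1$1 \<noteq> 0" "A$2$2 \<noteq> 0" using e(5) by auto
    let ?t = "mat3 (A$1$1) 0 0 0 (A$2$2) 0 0 0 (A$3$3)"
    let ?n = "mat3 1 0 (A$1$3 / A$1$1) 0 1 (A$2$3 / A$2$2) 0 0 1"
    have "?t \<in> Tdiag" using e(5) unfolding Tdiag_def by blast
    moreover have "?n \<in> Ngrp" unfolding Ngrp_def by blast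
    moreover have "A = ?t ** ?n" using e nz by (subst mat3_eta) (simp add: mat3_mult)
    ultimately show "A \<in> {t ** n | t n. t \<in> Tdiag \<and> n \<in> Ngrp}" by blast
  qed
qed

lemma normalizer_last_row:
  assumes g: "g \<in> normalizer K" and K: "K \<subseteq> Bgrp" "E13 1 \<in> K" "E23 1 \<in> K"
  shows "g$3$1 = 0" "g$3$2 = 0"
proof -
  obtain k where k: "k \<in> Bgrp" "g ** E13 1 = k ** g"
    using normalizer_intertwine[OF g K(2)] K(1) by blast
  then have "(g ** E13 1)$3$1 = (k ** g)$3$1" "(g ** E13 1)$3$3 = (k ** g)$3$3" by simp_all
  then have "g$3$1 = k$3$3 * g$3$1" "g$3$1 + g$3$3 = k$3$3 * g$3$3"
    using Bgrp_entries[OF k(1)] by (simp_all add: mult_entry Edefs)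
  then show "g$3$1 = 0" by (cases "k$3$3 = 1") (auto simp: algebra_simps)
  obtain k' where k': "k' \<in> Bgrp" "g ** E23 1 = k' ** g"
    using normalizer_intertwine[OF g K(3)] K(1) by blast
  then have "(g ** E23 1)$3$2 = (k' ** g)$3$2" "(g ** E23 1)$3$3 = (k' ** g)$3$3" by simp_all
  then have "g$3$2 = k'$3$3 * g$3$2" "g$3$2 + g$3$3 = k'$3$3 * g$3$3"
    using Bgrp_entries[OF k'(1)] by (simp_all add: mult_entry Edefs)
  then show "g$3$2 = 0" by (cases "k'$3$3 = 1") (auto simp: algebra_simps)
qed

text \<open>An element of \<open>N(H)\<close> is upper block triangular by the previous lemma, and
  intertwining with the torus element \<open>diag(2, 1, 1/2) \<in> H\<close> forces \<open>g\<^sub>1\<^sub>2 = g\<^sub>2\<^sub>1 = 0\<close>.\<close>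

lemma normalizer_Hgrp_sub:
  assumes g: "g \<in> normalizer Hgrp"
  shows "g \<in> Mgrp"
proof -
  have gS: "g \<in> SL3" using g normalizer_def by blast
  have HB: "Hgrp \<subseteq> Bgrp" by (auto simp: Hgrp_char Bgrp_def)
  have "E13 1 \<in> Hgrp" "E23 1 \<in> Hgrp" by (simp_all add: Hgrp_char Edefs SL3_def mat3_det)
  note z = normalizer_last_row[OF g HB this]
  have "dg 2 1 (1/2) \<in> Hgrp" by (simp add: Hgrp_char dg_def SL3_def mat3_det)
  then obtain h where h: "h \<in> Hgrp" "g ** dg 2 1 (1/2) = h ** g"
    using normalizer_intertwine[OF g] by blast
  note he = Hgrp_entries[OF h(1)]
  have "(g ** dg 2 1 (1/2))$3$3 = (h ** g)$3$3" "(g ** dg 2 1 (1/2))$1$2 = (h ** g)$1$2"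
    "(g ** dg 2 1 (1/2))$2$1 = (h ** g)$2$1" using h(2) by simp_all
  then have eqs: "g$3$3 / 2 = inverse (h$1$1) * g$3$3" "g$1$2 = h$1$1 * g$1$2" "2 * g$2$1 = g$2$1"
    using he z by (simp_all add: mult_entry dg_def)
  have "g$3$3 * (g$1$1 * g$2$2 - g$1$2 * g$2$1) = 1" using gS z by (simp add: SL3_det algebra_simps)
  then have "g$3$3 \<noteq> 0" by auto
  then have "h$1$1 = 2" using eqs(1) he(7) by (simp add: field_simps)
  then have "g$1$2 = 0" "g$2$1 = 0" using eqs(2,3) by simp_all
  then show ?thesis using z gS by (simp add: Mgrp_def)
qed

lemma Mgrp_conj_Hgrp:
  assumes "m \<in> Mgrp" "k \<in> Hgrp"
  shows "m ** k ** minv m \<in> Hgrp"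
proof -
  note me = Mgrp_entries[OF assms(1)] and ke = Hgrp_entries[OF assms(2)]
  have "m ** k ** minv m \<in> SL3" using me(6) ke(8) by (simp add: SL3_mult SL3_inv)
  then show ?thesis unfolding Hgrp_char using me ke
    by (simp add: mult_entry minv_entries) (simp add: algebra_simps)
qed

lemma normalizer_Hgrp: "normalizer Hgrp = Mgrp"
proof
  show "normalizer Hgrp \<subseteq> Mgrp" using normalizer_Hgrp_sub by blast
  show "Mgrp \<subseteq> normalizer Hgrp"
  proof
    fix m assume m: "m \<in> Mgrp"
    show "m \<in> normalizer Hgrp"
    proof (rule normalizerI)
      show mS: "m \<in> SL3" using Mgrp_entries[OF m] by simp
      show "m ** k ** minv m \<in> Hgrp" if "k \<in> Hgrp" for k using Mgrp_conj_Hgrp m that by blast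
      show "minv m ** k ** m \<in> Hgrp" if "k \<in> Hgrp" for k
        using Mgrp_conj_Hgrp[OF msub_inv[OF msubgroup_Mgrp m] that] minv_minv[OF mS] by simp
    qed
  qed
qed

text \<open>Every element of the coset \<open>\<rho> M\<close> has vanishing entries
  \<open>(1,1), (2,2), (3,1), (3,2)\<close>, and all such matrices normalize \<open>M\<close>. Conversely, intertwining with
  \<open>diag(2, 3, 1/6) \<in> M\<close> shows that an element of \<open>N(M)\<close> lies in one of the two cosets.\<close>

definition rho_coset :: "cmat set" where
  "rho_coset = {A. A$1$1 = 0 \<and> A$2$2 = 0 \<and> A$3$1 = 0 \<and> A$3$2 = 0 \<and> A \<in> SL3}"

lemma rho_SL3: "rho \<in> SL3"
  by (simp add: rho_def SL3_def mat3_det)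

lemma rho_rho: "rho ** rho = mat 1"
  by (simp add: rho_def mat3_mult mat3_one)

lemma rho_mult_Mgrp: "m \<in> Mgrp \<Longrightarrow> rho ** m \<in> rho_coset"
  using Mgrp_entries[of m] rho_SL3 by (simp add: rho_coset_def rho_def mult_entry SL3_mult)

lemma rho_coset_normalizes_Mgrp:
  assumes "g \<in> rho_coset"
  shows "g \<in> normalizer Mgrp"
proof -
  have conj: "x ** k ** minv x \<in> Mgrp" if "x \<in> rho_coset" "k \<in> Mgrp" for x k
  proof -
    have xS: "x \<in> SL3" using that(1) by (simp add: rho_coset_def)
    then have "x ** k ** minv x \<in> SL3" using Mgrp_entries(6)[OF that(2)] by (simp add: SL3_mult SL3_inv)
    then show ?thesis using that Mgrp_entries[OF that(2)] unfolding Mgrp_def rho_coset_def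
      by (simp add: mult_entry minv_entries[OF xS])
  qed
  have gS: "g \<in> SL3" and gi: "minv g \<in> rho_coset"
    using assms SL3_inv(3)[of g] by (simp_all add: rho_coset_def minv_entries)
  show ?thesis
    by (rule normalizerI[OF gS]) (use conj assms gi minv_minv[OF gS] in \<open>metis+\<close>)
qed

lemma normalizer_Mgrp_sub:
  assumes g: "g \<in> normalizer Mgrp"
  shows "g \<in> Mgrp \<union> (\<lambda>x. rho ** x) ` Mgrp"
proof -
  have gS: "g \<in> SL3" using g normalizer_def by blast
  have MB: "Mgrp \<subseteq> Bgrp" by (auto simp: Mgrp_def Bgrp_def)
  have "E13 1 \<in> Mgrp" "E23 1 \<in> Mgrp" by (simp_all add: Mgrp_def Edefs SL3_def mat3_det)
  note z = normalizer_last_row[OF g MB this]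
  have "dg 2 3 (1/6) \<in> Mgrp" by (simp add: Mgrp_def dg_def SL3_def mat3_det)
  then obtain h where h: "h \<in> Mgrp" "g ** dg 2 3 (1/6) = h ** g"
    using normalizer_intertwine[OF g] by blast
  have "(g ** dg 2 3 (1/6))$1$1 = (h ** g)$1$1" "(g ** dg 2 3 (1/6))$1$2 = (h ** g)$1$2"
    "(g ** dg 2 3 (1/6))$2$1 = (h ** g)$2$1" "(g ** dg 2 3 (1/6))$2$2 = (h ** g)$2$2"
    using h(2) by simp_all
  then have eqs: "2 * g$1$1 = h$1$1 * g$1$1" "3 * g$1$2 = h$1$1 * g$1$2"
    "2 * g$2$1 = h$2$2 * g$2$1" "3 * g$2$2 = h$2$2 * g$2$2"
    using Mgrp_entries[OF h(1)] z by (simp_all add: mult_entry dg_def)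
  have det: "g$3$3 * (g$1$1 * g$2$2 - g$1$2 * g$2$1) = 1"
    using gS z by (simp add: SL3_det algebra_simps)
  show ?thesis
  proof (cases "g$1$1 = 0")
    case False
    then have "g$1$2 = 0" using eqs(1,2) by auto
    then have "g$2$1 = 0" using eqs(3,4) det by auto
    then show ?thesis using \<open>g$1$2 = 0\<close> z gS by (simp add: Mgrp_def)
  next
    case True
    then have "g$2$2 = 0" using eqs(3,4) det by auto
    then have "rho ** g \<in> Mgrp" using True z gS rho_SL3
      by (simp add: Mgrp_def rho_def mult_entry SL3_mult)
    moreover have "g = rho ** (rho ** g)" by (simp add: matrix_mul_assoc rho_rho)
    ultimately show ?thesis by blast
  qed
qed

lemma normalizer_Mgrp: "normalizer Mgrp = Mgrp \<union> (\<lambda>x. rho ** x) ` Mgrp"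
  using normalizer_Mgrp_sub normalizer_subgroup[OF msubgroup_Mgrp]
    rho_coset_normalizes_Mgrp rho_mult_Mgrp by blast

lemma normalizer_Mgrp_ne: "normalizer Mgrp \<noteq> Mgrp"
proof -
  have "rho = rho ** mat 1" by simp
  then have "rho \<in> normalizer Mgrp"
    unfolding normalizer_Mgrp using msub_one[OF msubgroup_Mgrp] by blast
  moreover have "rho \<notin> Mgrp" by (simp add: Mgrp_def rho_def)
  ultimately show ?thesis by blast
qed

theorem mainTheorem8:
  shows "closed_subgroup Hgrp \<and> zconnected Hgrp \<and> msolvable Hgrp \<and> spherical Hgrp
    \<and> normalizer Hgrp = {t ** n | t n. t \<in> Tdiag \<and> n \<in> Ngrp}
    \<and> normalizer (normalizer Hgrp) = normalizer Hgrp \<union> (\<lambda>x. rho ** x) ` normalizer Hgrp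
    \<and> normalizer (normalizer Hgrp) \<noteq> normalizer Hgrp"
  using msubgroup_Hgrp zclosed_Hgrp zconnected_Hgrp msolvable_Hgrp spherical_Hgrp
    normalizer_Hgrp Mgrp_eq_TN normalizer_Mgrp normalizer_Mgrp_ne
  by (simp add: closed_subgroup_def)

end
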